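(* Let $\overline{C}_n$ denote the graph complement of the cycle graph $C_n$. Then $\tau(\overline{C}_n)\to e$ as $n\to\infty$, where $e$ is Euler's number.
   Context: For a finite simple graph $G$, $K=D-A$ is its Kirchhoff matrix (degree matrix minus adjacency matrix), ${\rm Det}(K)$ its pseudo-determinant (product of non-zero eigenvalues with multiplicity), and $\tau(G)={\rm det}(1+K)/{\rm Det}(K)=\prod_{\lambda\neq0}(1+1/\lambda)$, the product running over the non-zero eigenvalues of $K$. *)

theory Defs
  imports "Jordan_Normal_Form.Char_Poly" "HOL-Computational_Algebra.Polynomial"
begin

text \<open>Simple graphs on the vertex set {0..<n}, given by an adjacency predicate.\<close>

definition cycle_adj :: "nat \<Rightarrow> nat \<Rightarrow> nat \<Rightarrow> bool" where
  "cycle_adj n i j \<longleftrightarrow> i < n \<and> j < n \<and> i \<noteq> j \<and> (j = (i + 1) mod n \<or> i = (j + 1) mod n)"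

definition compl_adj :: "nat \<Rightarrow> (nat \<Rightarrow> nat \<Rightarrow> bool) \<Rightarrow> nat \<Rightarrow> nat \<Rightarrow> bool" where
  "compl_adj n A i j \<longleftrightarrow> i < n \<and> j < n \<and> i \<noteq> j \<and> \<not> A i j"

definition kirchhoff :: "nat \<Rightarrow> (nat \<Rightarrow> nat \<Rightarrow> bool) \<Rightarrow> real mat" where
  "kirchhoff n A = mat n n (\<lambda>(i, j). if i = j then real (card {k. k < n \<and> A i k})
                                      else if A i j then -1 else 0)"

definition eigenvalues_mset :: "real mat \<Rightarrow> complex multiset" where
  "eigenvalues_mset M = proots (char_poly (map_mat complex_of_real M))"

definition pdet :: "real mat \<Rightarrow> complex" where
  "pdet M = prod_mset (filter_mset (\<lambda>x. x \<noteq> 0) (eigenvalues_mset M))"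

definition tau :: "nat \<Rightarrow> (nat \<Rightarrow> nat \<Rightarrow> bool) \<Rightarrow> complex" where
  "tau n A = complex_of_real (det (1\<^sub>m n + kirchhoff n A)) / pdet (kirchhoff n A)"

end

theory Submission
  imports Defs "HOL-Analysis.Complex_Transcendental"
begin

(* The Kirchhoff matrix of the complement of C_n is circulant: its entry (j, l) depends only
   on l - j mod n.  The discrete Fourier matrix therefore diagonalises it, and its eigenvalues
   are 0 and n - 2 + 2 cos (2 pi k / n) for 0 < k < n, all lying in [n - 4, n].  Since det (1 + K)
   is the product of 1 + lambda over all eigenvalues, tau is the product of 1 + 1 / lambda_k over
   the n - 1 nonzero ones, which is squeezed between (1 + 1/n)^(n-1) and (1 + 1/(n-4))^(n-1);
   both bounds tend to e. *)

lemma add_mod_diff_mod: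
  assumes "j < (n::nat)" "m < n" shows "((m + j) mod n + n - j) mod n = m"
proof -
  have "((m + j) mod n + n - j) mod n = ((m + j) mod n + (n - j)) mod n"
    using assms by simp
  also have "\<dots> = (m + n) mod n"
    unfolding mod_add_left_eq using assms by simp
  finally show ?thesis using assms by simp
qed

lemma diff_mod_add_mod:
  assumes "j < (n::nat)" "l < n" shows "((l + n - j) mod n + j) mod n = l"
proof -
  have "((l + n - j) mod n + j) mod n = (l + n - j + j) mod n"
    by (rule mod_add_left_eq)
  also have "\<dots> = (l + n) mod n" using assms by simp
  finally show ?thesis using assms by simp
qed

lemma diff_mod_eq_iff:
  assumes "j < (n::nat)" "l < n" "m < n"
  shows "(l + n - j) mod n = m \<longleftrightarrow> l = (m + j) mod n"
  using add_mod_diff_mod[OF assms(1,3)] diff_mod_add_mod[OF assms(1,2)] by auto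

lemma bij_betw_add_mod:
  assumes "j < (n::nat)" shows "bij_betw (\<lambda>m. (m + j) mod n) {..<n} {..<n}"
  by (rule bij_betw_byWitness[where f' = "\<lambda>l. (l + n - j) mod n"])
     (use assms add_mod_diff_mod diff_mod_add_mod in auto)

lemma bij_betw_diff_mod:
  assumes "j < (n::nat)" shows "bij_betw (\<lambda>l. (l + n - j) mod n) {..<n} {..<n}"
  by (rule bij_betw_byWitness[where f' = "\<lambda>m. (m + j) mod n"])
     (use assms add_mod_diff_mod diff_mod_add_mod in auto)

lemma card_preimage_bij_betw:
  assumes "bij_betw f A B" shows "card {x \<in> A. f x \<in> S} = card (B \<inter> S)"
proof -
  have "f ` {x \<in> A. f x \<in> S} = B \<inter> S"
    using bij_betw_imp_surj_on[OF assms] by blast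
  hence "bij_betw f {x \<in> A. f x \<in> S} (B \<inter> S)"
    by (intro bij_betw_subset[OF assms]) auto
  thus ?thesis by (rule bij_betw_same_card)
qed

section \<open>Roots of unity and the Fourier matrix\<close>

definition unity_root :: "nat \<Rightarrow> complex" where
  "unity_root n = cis (2 * pi / n)"

lemma unity_root_pow: "unity_root n ^ j = cis (2 * pi * j / n)"
  unfolding unity_root_def Complex.DeMoivre by (simp add: mult.commute)

lemma unity_root_pow_eq_1_iff:
  assumes "n \<ge> 1" shows "unity_root n ^ j = 1 \<longleftrightarrow> n dvd j"
proof -
  have "unity_root n ^ j = exp (2 * of_real pi * \<i> * of_nat j / of_nat n)"
    unfolding unity_root_pow cis_conv_exp by (simp add: field_simps)
  thus ?thesis using complex_root_unity_eq_1[OF assms] by simp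
qed

lemma unity_root_pow_cong:
  assumes "n \<ge> 1" "a mod n = b mod n" shows "unity_root n ^ a = unity_root n ^ b"
proof -
  have "unity_root n ^ (a mod n + n * q) = unity_root n ^ (a mod n)" for q
    using unity_root_pow_eq_1_iff[OF assms(1), of n] by (simp add: power_add power_mult)
  thus ?thesis by (metis assms(2) div_mult_mod_eq add.commute mult.commute)
qed

lemma sum_unity_root_powers:
  assumes "n \<ge> 1"
  shows "(\<Sum>l<n. (unity_root n ^ e) ^ l) = (if n dvd e then of_nat n else 0)"
proof (cases "n dvd e")
  case True
  hence "unity_root n ^ e = 1" using unity_root_pow_eq_1_iff[OF assms] by simp
  thus ?thesis using True by simp
next
  case False
  have "(unity_root n ^ e) ^ n = 1"
    using unity_root_pow_eq_1_iff[OF assms, of "e * n"] by (simp add: power_mult)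
  thus ?thesis using geometric_sum[of "unity_root n ^ e" n] False unity_root_pow_eq_1_iff[OF assms]
    by simp
qed

lemma unity_root_pow_add_inverse_pow:
  assumes "n \<ge> 1" "k \<le> n"
  shows "unity_root n ^ k + unity_root n ^ ((n - 1) * k) = of_real (2 * cos (2 * pi * k / n))"
proof -
  let ?t = "2 * pi * k / n"
  have "2 * pi * real ((n - 1) * k) / n = 2 * pi * real k - ?t"
    using assms by (simp add: of_nat_diff field_simps)
  moreover have "cis (2 * pi * real k - ?t) = cis (2 * pi * real k) * cis (- ?t)"
    by (simp only: cis_mult diff_conv_add_uminus)
  moreover have "cis (2 * pi * real k) = 1"
    by (rule cis_multiple_2pi) simp
  ultimately have "unity_root n ^ ((n - 1) * k) = cis (- ?t)"
    unfolding unity_root_pow by simp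
  thus ?thesis unfolding unity_root_pow by (simp add: complex_eq_iff cos_of_real)
qed

definition fourier_mat :: "nat \<Rightarrow> complex mat" where
  "fourier_mat n = Matrix.mat n n (\<lambda>(j, k). unity_root n ^ (j * k))"

(* unity_root n ^ (n - 1) is the inverse of unity_root n; this avoids negative exponents. *)
definition inverse_fourier_mat :: "nat \<Rightarrow> complex mat" where
  "inverse_fourier_mat n = Matrix.mat n n (\<lambda>(k, l). unity_root n ^ ((n - 1) * k * l) / of_nat n)"

lemma dvd_add_pred_mult_iff:
  assumes "j < (n::nat)" "l < n" shows "n dvd j + (n - 1) * l \<longleftrightarrow> j = l"
proof -
  have "1 \<le> n" using assms by simp
  hence "int (j + (n - 1) * l) = int j + (int n - 1) * int l"
    by (simp only: of_nat_add of_nat_mult of_nat_diff of_nat_1)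
  hence "int (j + (n - 1) * l) = (int j - int l) + int n * int l"
    by (simp add: algebra_simps)
  hence "n dvd j + (n - 1) * l \<longleftrightarrow> int n dvd int j - int l"
    by (simp only: int_dvd_int_iff[symmetric]) (simp add: dvd_add_left_iff)
  also have "\<dots> \<longleftrightarrow> j = l"
  proof
    assume "int n dvd int j - int l"
    thus "j = l" using dvd_imp_le_int[of "int j - int l" "int n"] assms by (cases "j = l") auto
  qed simp
  finally show ?thesis .
qed

lemma fourier_mat_mult_inverse:
  assumes "n \<ge> 1" shows "fourier_mat n * inverse_fourier_mat n = 1\<^sub>m n"
proof (rule eq_matI)
  fix j l assume "j < dim_row (1\<^sub>m n)" "l < dim_col (1\<^sub>m n)"
  hence jl: "j < n" "l < n" by auto
  have "(fourier_mat n * inverse_fourier_mat n) $$ (j, l)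
      = (\<Sum>k<n. unity_root n ^ (j * k) * (unity_root n ^ ((n - 1) * k * l) / of_nat n))"
    using jl by (simp add: fourier_mat_def inverse_fourier_mat_def scalar_prod_def lessThan_atLeast0)
  also have "\<dots> = (\<Sum>k<n. (unity_root n ^ (j + (n - 1) * l)) ^ k) / of_nat n"
  proof -
    have "unity_root n ^ (j * k) * unity_root n ^ ((n - 1) * k * l)
        = (unity_root n ^ (j + (n - 1) * l)) ^ k" for k
      by (simp add: power_add[symmetric] power_mult[symmetric] algebra_simps)
    thus ?thesis by (simp add: sum_divide_distrib)
  qed
  also have "\<dots> = 1\<^sub>m n $$ (j, l)"
    using sum_unity_root_powers[OF assms] dvd_add_pred_mult_iff[OF jl] jl assms by auto
  finally show "(fourier_mat n * inverse_fourier_mat n) $$ (j, l) = 1\<^sub>m n $$ (j, l)" .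
qed (auto simp: fourier_mat_def inverse_fourier_mat_def)

section \<open>Spectrum of circulant matrices\<close>

(* The entry (j, l) is c applied to the offset l - j mod n, written without truncated subtraction. *)
definition circulant_mat :: "nat \<Rightarrow> (nat \<Rightarrow> 'a) \<Rightarrow> 'a mat" where
  "circulant_mat n c = Matrix.mat n n (\<lambda>(j, l). c ((l + n - j) mod n))"

definition circulant_eigenvalue :: "nat \<Rightarrow> (nat \<Rightarrow> complex) \<Rightarrow> nat \<Rightarrow> complex" where
  "circulant_eigenvalue n c k = (\<Sum>m<n. c m * unity_root n ^ (m * k))"

lemma fourier_mat_carrier [simp]: "fourier_mat n \<in> carrier_mat n n"
  and inverse_fourier_mat_carrier [simp]: "inverse_fourier_mat n \<in> carrier_mat n n"
  and circulant_mat_carrier [simp]: "circulant_mat n c \<in> carrier_mat n n"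
  by (simp_all add: fourier_mat_def inverse_fourier_mat_def circulant_mat_def)

lemma circulant_mat_mult_fourier:
  assumes "n \<ge> 1"
  shows "circulant_mat n c * fourier_mat n = fourier_mat n * mat_diag n (circulant_eigenvalue n c)"
    (is "_ = fourier_mat n * ?D")
proof (rule eq_matI)
  fix j k assume "j < dim_row (fourier_mat n * ?D)" "k < dim_col (fourier_mat n * ?D)"
  hence jk: "j < n" "k < n" by (auto simp: fourier_mat_def mat_diag_def)
  let ?\<omega> = "unity_root n"
  have "(circulant_mat n c * fourier_mat n) $$ (j, k) = (\<Sum>l<n. c ((l + n - j) mod n) * ?\<omega> ^ (l * k))"
    using jk by (simp add: circulant_mat_def fourier_mat_def scalar_prod_def lessThan_atLeast0)
  also have "\<dots> = (\<Sum>m<n. c (((m + j) mod n + n - j) mod n) * ?\<omega> ^ ((m + j) mod n * k))"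
    by (rule sum.reindex_bij_betw[OF bij_betw_add_mod[OF jk(1)], symmetric])
  also have "\<dots> = (\<Sum>m<n. ?\<omega> ^ (j * k) * (c m * ?\<omega> ^ (m * k)))"
  proof (rule sum.cong[OF refl])
    fix m assume "m \<in> {..<n}"
    hence "((m + j) mod n + n - j) mod n = m" using add_mod_diff_mod[OF jk(1)] by simp
    moreover have "?\<omega> ^ ((m + j) mod n * k) = ?\<omega> ^ ((m + j) * k)"
      using assms by (intro unity_root_pow_cong) (simp_all add: mod_mult_left_eq)
    ultimately show "c (((m + j) mod n + n - j) mod n) * ?\<omega> ^ ((m + j) mod n * k)
        = ?\<omega> ^ (j * k) * (c m * ?\<omega> ^ (m * k))"
      by (simp add: power_add algebra_simps)
  qed
  also have "\<dots> = (fourier_mat n * ?D) $$ (j, k)"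
    using jk by (simp add: mat_diag_mult_right[of _ n n] fourier_mat_def circulant_eigenvalue_def
        sum_distrib_left)
  finally show "(circulant_mat n c * fourier_mat n) $$ (j, k) = (fourier_mat n * ?D) $$ (j, k)" .
qed (auto simp: circulant_mat_def fourier_mat_def mat_diag_def)

lemma map_mat_circulant_mat: "map_mat f (circulant_mat n c) = circulant_mat n (\<lambda>m. f (c m))"
  by (auto simp: circulant_mat_def)

lemma circulant_mat_similar_diag:
  assumes "n \<ge> 1"
  shows "similar_mat (circulant_mat n c) (mat_diag n (circulant_eigenvalue n c))"
proof (rule similar_matI)
  let ?C = "circulant_mat n c" and ?D = "mat_diag n (circulant_eigenvalue n c)"
    and ?F = "fourier_mat n" and ?F' = "inverse_fourier_mat n"
  show "{?C, ?D, ?F, ?F'} \<subseteq> carrier_mat n n" by simp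
  show FF': "?F * ?F' = 1\<^sub>m n" by (rule fourier_mat_mult_inverse[OF assms])
  show "?F' * ?F = 1\<^sub>m n" by (rule mat_mult_left_right_inverse[OF _ _ FF']) simp_all
  have "?F * ?D * ?F' = ?C * ?F * ?F'" by (simp add: circulant_mat_mult_fourier[OF assms])
  also have "\<dots> = ?C * (?F * ?F')"
    by (rule assoc_mult_mat[OF circulant_mat_carrier fourier_mat_carrier inverse_fourier_mat_carrier])
  also have "\<dots> = ?C" by (simp add: FF' right_mult_one_mat[OF circulant_mat_carrier])
  finally show "?C = ?F * ?D * ?F'" by simp
qed

lemma proots_prod_linear_factors: "proots (\<Prod>a\<leftarrow>as. [:- a, 1:]) = mset as"
proof (induction as)
  case (Cons a as)
  let ?P = "\<Prod>a\<leftarrow>as. [:- a, 1:]"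
  have "?P \<noteq> 0" by (auto simp: prod_list_zero_iff)
  hence "proots ([:- a, 1:] * ?P) = proots [:- a, 1:] + proots ?P" by (intro proots_mult) simp_all
  thus ?case using Cons.IH by simp
qed simp

lemma proots_char_poly_mat_diag:
  "proots (char_poly (mat_diag n f)) = mset (map f [0..<n])"
proof -
  have "upper_triangular (mat_diag n f)" by (simp add: upper_triangular_def mat_diag_def)
  moreover have "diag_mat (mat_diag n f) = map f [0..<n]"
    by (simp add: diag_mat_def mat_diag_def)
  ultimately show ?thesis
    using char_poly_upper_triangular[OF mat_diag_dim] proots_prod_linear_factors by metis
qed

lemma proots_char_poly_circulant:
  assumes "n \<ge> 1"
  shows "proots (char_poly (circulant_mat n c)) = mset (map (circulant_eigenvalue n c) [0..<n])"
  using char_poly_similar[OF circulant_mat_similar_diag[OF assms]] proots_char_poly_mat_diag by simp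

section \<open>Tau through the spectrum\<close>

(* det (1 + A) is (-1)^n times the characteristic polynomial evaluated at -1. *)
lemma det_one_plus_eq_prod_proots:
  fixes A :: "complex mat"
  assumes A: "A \<in> carrier_mat n n"
  shows "det (1\<^sub>m n + A) = (\<Prod>x\<in>#proots (char_poly A). 1 + x)"
proof -
  obtain as where char: "char_poly A = (\<Prod>a\<leftarrow>as. [:- a, 1:])" and len: "length as = n"
    using char_poly_factorized[OF A] by blast
  have "poly (char_poly A) (-1) = det (- char_matrix A (-1))"
    by (rule char_poly_matrix[OF A])
  also have "- char_matrix A (-1) = (-1) \<cdot>\<^sub>m (1\<^sub>m n + A)"
    using A by (intro eq_matI) (auto simp: char_matrix_def)
  finally have "poly (char_poly A) (-1) = (-1) ^ n * det (1\<^sub>m n + A)"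
    using A by simp
  moreover have "(\<Prod>a\<leftarrow>bs. - a - 1) = (-1) ^ length bs * (\<Prod>a\<leftarrow>bs. 1 + a)"
    for bs :: "complex list"
    by (induction bs) (simp_all add: algebra_simps)
  hence "poly (char_poly A) (-1) = (-1) ^ n * (\<Prod>a\<leftarrow>as. 1 + a)"
    unfolding char len[symmetric] by (simp add: poly_prod_list o_def)
  ultimately have "det (1\<^sub>m n + A) = (\<Prod>a\<leftarrow>as. 1 + a)"
    by simp
  also have "\<dots> = (\<Prod>x\<in>#proots (char_poly A). 1 + x)"
    unfolding char proots_prod_linear_factors by (metis mset_map prod_mset_prod_list)
  finally show ?thesis .
qed

lemma prod_mset_divide:
  fixes f g :: "'a \<Rightarrow> 'b :: field"
  shows "(\<Prod>x\<in>#M. f x) / (\<Prod>x\<in>#M. g x) = (\<Prod>x\<in>#M. f x / g x)"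
proof (induction M)
  case (add x M)
  thus ?case by (simp add: times_divide_times_eq[symmetric])
qed simp

lemma prod_mset_one_plus_filter_nonzero:
  fixes M :: "'a :: comm_ring_1 multiset"
  shows "(\<Prod>x\<in>#M. 1 + x) = (\<Prod>x\<in>#filter_mset (\<lambda>x. x \<noteq> 0) M. 1 + x)"
  by (induction M) simp_all

lemma tau_eq_prod_nonzero_eigenvalues:
  "tau n A = (\<Prod>x\<in>#filter_mset (\<lambda>x. x \<noteq> 0) (eigenvalues_mset (kirchhoff n A)). 1 + 1 / x)"
proof -
  let ?K = "kirchhoff n A"
  let ?E = "filter_mset (\<lambda>x. x \<noteq> 0) (eigenvalues_mset ?K)"
  have K: "map_mat complex_of_real ?K \<in> carrier_mat n n" by (simp add: kirchhoff_def)
  have "complex_of_real (det (1\<^sub>m n + ?K)) = det (map_mat complex_of_real (1\<^sub>m n + ?K))"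
    by simp
  also have "map_mat complex_of_real (1\<^sub>m n + ?K) = 1\<^sub>m n + map_mat complex_of_real ?K"
    using K by (intro eq_matI) auto
  also have "det \<dots> = (\<Prod>x\<in>#?E. 1 + x)"
    unfolding det_one_plus_eq_prod_proots[OF K] eigenvalues_mset_def[symmetric]
    by (rule prod_mset_one_plus_filter_nonzero)
  finally have "tau n A = (\<Prod>x\<in>#?E. 1 + x) / (\<Prod>x\<in>#?E. x)"
    by (simp add: tau_def pdet_def)
  also have "\<dots> = (\<Prod>x\<in>#?E. (1 + x) / x)"
    by (rule prod_mset_divide)
  also have "\<dots> = (\<Prod>x\<in>#?E. 1 + 1 / x)"
    by (intro arg_cong[where f = prod_mset] image_mset_cong) (simp add: add_divide_distrib)
  finally show ?thesis .
qed

section \<open>The complement of the cycle\<close>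

lemma kirchhoff_circulant:
  assumes adj: "\<And>j l. j < n \<Longrightarrow> l < n \<Longrightarrow> A j l \<longleftrightarrow> (l + n - j) mod n \<in> S"
    and "0 \<notin> S"
  shows "kirchhoff n A
    = circulant_mat n (\<lambda>m. if m = 0 then real (card ({..<n} \<inter> S)) else if m \<in> S then -1 else 0)"
    (is "_ = circulant_mat n ?c")
proof (rule eq_matI)
  fix j l assume "j < dim_row (circulant_mat n ?c)" "l < dim_col (circulant_mat n ?c)"
  hence jl: "j < n" "l < n" by (simp_all add: circulant_mat_def)
  have "card {k. k < n \<and> A j k} = card {k \<in> {..<n}. (k + n - j) mod n \<in> S}"
    using adj[OF jl(1)] by (intro arg_cong[where f = card]) auto
  also have "\<dots> = card ({..<n} \<inter> S)"
    by (rule card_preimage_bij_betw[OF bij_betw_diff_mod[OF jl(1)]])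
  finally have "card {k. k < n \<and> A j k} = card ({..<n} \<inter> S)" .
  moreover have "(l + n - j) mod n = 0 \<longleftrightarrow> l = j"
    using diff_mod_eq_iff[OF jl, of 0] jl by simp
  ultimately show "kirchhoff n A $$ (j, l) = circulant_mat n ?c $$ (j, l)"
    using jl adj[OF jl] assms(2) by (auto simp: kirchhoff_def circulant_mat_def)
qed (simp_all add: kirchhoff_def circulant_mat_def)

lemma cycle_adj_iff_offset:
  assumes "n \<ge> 2" "j < n" "l < n"
  shows "cycle_adj n j l \<longleftrightarrow> (l + n - j) mod n \<in> {1, n - 1}"
proof -
  have "l = (j + n - 1) mod n \<longleftrightarrow> j = (l + 1) mod n"
    using add_mod_diff_mod[of 1 n l] diff_mod_add_mod[of 1 n j] assms by auto
  hence "(l + n - j) mod n = n - 1 \<longleftrightarrow> j = (l + 1) mod n"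
    using diff_mod_eq_iff[OF assms(2,3), of "n - 1"] assms by (simp add: add.commute)
  moreover have "(l + n - j) mod n = 1 \<longleftrightarrow> l = (j + 1) mod n"
    using diff_mod_eq_iff[OF assms(2,3), of 1] assms by (simp add: add.commute)
  moreover have "(l + n - j) mod n = 0 \<longleftrightarrow> l = j"
    using diff_mod_eq_iff[OF assms(2,3), of 0] assms by simp
  ultimately show ?thesis
    unfolding cycle_adj_def using assms by auto
qed

definition compl_cycle_kirchhoff_row :: "nat \<Rightarrow> nat \<Rightarrow> real" where
  "compl_cycle_kirchhoff_row n m = (if m = 0 then real n - 3 else if m = 1 \<or> m = n - 1 then 0 else -1)"

lemma kirchhoff_compl_cycle:
  assumes "n \<ge> 3"
  shows "kirchhoff n (compl_adj n (cycle_adj n)) = circulant_mat n (compl_cycle_kirchhoff_row n)"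
proof -
  let ?S = "- {0, 1, n - 1}"
  have adj: "compl_adj n (cycle_adj n) j l \<longleftrightarrow> (l + n - j) mod n \<in> ?S" if "j < n" "l < n" for j l
    using cycle_adj_iff_offset[OF _ that] diff_mod_eq_iff[OF that, of 0] that assms
    by (auto simp: compl_adj_def)
  have "{..<n} \<inter> ?S = {..<n} - {0, 1, n - 1}" by auto
  hence card: "real (card ({..<n} \<inter> ?S)) = real n - 3"
    using assms by (simp add: card_Diff_subset of_nat_diff)
  have "kirchhoff n (compl_adj n (cycle_adj n))
      = circulant_mat n (\<lambda>m. if m = 0 then real (card ({..<n} \<inter> ?S)) else if m \<in> ?S then -1 else 0)"
    by (rule kirchhoff_circulant) (use adj in auto)
  also have "\<dots> = circulant_mat n (compl_cycle_kirchhoff_row n)"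
    unfolding card compl_cycle_kirchhoff_row_def
    by (intro arg_cong[where f = "circulant_mat n"] ext) auto
  finally show ?thesis .
qed

definition compl_cycle_eigenvalue :: "nat \<Rightarrow> nat \<Rightarrow> real" where
  "compl_cycle_eigenvalue n k = (if k = 0 then 0 else real n - 2 + 2 * cos (2 * pi * k / n))"

lemma circulant_eigenvalue_compl_cycle:
  assumes "n \<ge> 3" "k < n"
  shows "circulant_eigenvalue n (\<lambda>m. complex_of_real (compl_cycle_kirchhoff_row n m)) k
    = complex_of_real (compl_cycle_eigenvalue n k)"
proof -
  let ?\<omega> = "unity_root n"
  have "complex_of_real (compl_cycle_kirchhoff_row n m)
      = (if m = 0 then of_nat n - 2 else 0) - 1 + (if m = 1 then 1 else 0) + (if m = n - 1 then 1 else 0)"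
    for m using assms by (auto simp: compl_cycle_kirchhoff_row_def)
  hence "circulant_eigenvalue n (\<lambda>m. complex_of_real (compl_cycle_kirchhoff_row n m)) k
    = (of_nat n - 2) - (\<Sum>m<n. ?\<omega> ^ (m * k)) + (?\<omega> ^ k + ?\<omega> ^ ((n - 1) * k))"
    using assms
    by (simp add: circulant_eigenvalue_def ring_distribs sum.distrib sum_subtractf
        if_distrib[of "\<lambda>x. x * _"] cong: if_cong)
  also have "(\<Sum>m<n. ?\<omega> ^ (m * k)) = (if k = 0 then of_nat n else 0)"
    using sum_unity_root_powers[of n k] assms by (auto simp: power_mult[symmetric] mult.commute)
  finally show ?thesis
    using unity_root_pow_add_inverse_pow[of n k] assms by (simp add: compl_cycle_eigenvalue_def)
qed

lemma eigenvalues_mset_kirchhoff_compl_cycle: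
  assumes "n \<ge> 3"
  shows "eigenvalues_mset (kirchhoff n (compl_adj n (cycle_adj n)))
    = mset (map (\<lambda>k. complex_of_real (compl_cycle_eigenvalue n k)) [0..<n])"
proof -
  have "eigenvalues_mset (kirchhoff n (compl_adj n (cycle_adj n)))
      = mset (map (circulant_eigenvalue n (\<lambda>m. complex_of_real (compl_cycle_kirchhoff_row n m))) [0..<n])"
    using assms by (simp add: eigenvalues_mset_def kirchhoff_compl_cycle map_mat_circulant_mat
        proots_char_poly_circulant del: mset_map)
  also have "\<dots> = mset (map (\<lambda>k. complex_of_real (compl_cycle_eigenvalue n k)) [0..<n])"
    using assms
    by (intro arg_cong[where f = mset] map_cong) (simp_all add: circulant_eigenvalue_compl_cycle)
  finally show ?thesis .
qed

lemma compl_cycle_eigenvalue_bounds: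
  assumes "k \<ge> 1"
  shows "real n - 4 \<le> compl_cycle_eigenvalue n k" "compl_cycle_eigenvalue n k \<le> real n"
proof -
  have "-1 \<le> cos (2 * pi * k / n)" "cos (2 * pi * k / n) \<le> 1"
    by (rule cos_ge_minus_one, rule cos_le_one)
  moreover have "compl_cycle_eigenvalue n k = real n - 2 + 2 * cos (2 * pi * k / n)"
    using assms by (simp add: compl_cycle_eigenvalue_def)
  ultimately show "real n - 4 \<le> compl_cycle_eigenvalue n k" "compl_cycle_eigenvalue n k \<le> real n"
    by linarith+
qed

lemma tau_compl_cycle:
  assumes "n \<ge> 5"
  shows "tau n (compl_adj n (cycle_adj n))
    = complex_of_real (\<Prod>k = 1..<n. 1 + 1 / compl_cycle_eigenvalue n k)"
proof -
  let ?ev = "\<lambda>k. complex_of_real (compl_cycle_eigenvalue n k)"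
  have pos: "compl_cycle_eigenvalue n k > 0" if "k \<ge> 1" for k
    using compl_cycle_eigenvalue_bounds(1)[OF that, of n] assms by linarith
  have "k \<in> {0..<n} \<and> ?ev k \<noteq> 0 \<longleftrightarrow> k \<in> {1..<n}" for k
    using pos[of k] by (cases "k = 0") (auto simp: compl_cycle_eigenvalue_def[of n 0])
  hence "{k \<in> {0..<n}. ?ev k \<noteq> 0} = {1..<n}"
    by blast
  hence "filter_mset (\<lambda>x. x \<noteq> 0) (mset (map ?ev [0..<n])) = image_mset ?ev (mset_set {1..<n})"
    by (simp add: filter_mset_image_mset)
  hence "tau n (compl_adj n (cycle_adj n)) = (\<Prod>x\<in>#image_mset ?ev (mset_set {1..<n}). 1 + 1 / x)"
    using assms by (simp add: tau_eq_prod_nonzero_eigenvalues eigenvalues_mset_kirchhoff_compl_cycle)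
  also have "\<dots> = (\<Prod>k = 1..<n. 1 + 1 / ?ev k)"
    by (simp add: prod_unfold_prod_mset image_mset.compositionality o_def)
  finally show ?thesis by simp
qed

section \<open>The limit\<close>

lemma prod_one_plus_inverse_bounds:
  fixes x :: "'a \<Rightarrow> real"
  assumes "0 < lo" and "\<And>a. a \<in> A \<Longrightarrow> lo \<le> x a \<and> x a \<le> hi"
  shows "(1 + 1 / hi) ^ card A \<le> (\<Prod>a\<in>A. 1 + 1 / x a)"
    and "(\<Prod>a\<in>A. 1 + 1 / x a) \<le> (1 + 1 / lo) ^ card A"
proof -
  have recip: "0 \<le> 1 / hi" "0 \<le> 1 / x a" "1 / hi \<le> 1 / x a" "1 / x a \<le> 1 / lo"
    if "a \<in> A" for a
  proof -
    have "lo \<le> x a" "x a \<le> hi" using assms(2)[OF that] by auto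
    thus "0 \<le> 1 / hi" "0 \<le> 1 / x a" "1 / hi \<le> 1 / x a" "1 / x a \<le> 1 / lo"
      using assms(1) by (simp_all add: frac_le)
  qed
  have "(\<Prod>a\<in>A. 1 + 1 / hi) \<le> (\<Prod>a\<in>A. 1 + 1 / x a)"
    using recip by (intro prod_mono) auto
  thus "(1 + 1 / hi) ^ card A \<le> (\<Prod>a\<in>A. 1 + 1 / x a)" by simp
  have "(\<Prod>a\<in>A. 1 + 1 / x a) \<le> (\<Prod>a\<in>A. 1 + 1 / lo)"
    using recip by (intro prod_mono) auto
  thus "(\<Prod>a\<in>A. 1 + 1 / x a) \<le> (1 + 1 / lo) ^ card A" by simp
qed

lemma tendsto_one_plus_inverse_shifted_pow:
  "(\<lambda>n. (1 + 1 / (real n - real a)) ^ (n - 1)) \<longlonglongrightarrow> exp 1"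
proof (rule LIMSEQ_offset[where k = "a + 1"])
  let ?b = "\<lambda>m. 1 + 1 / real (Suc m)"
  have "(\<lambda>m. ?b m ^ Suc m) \<longlonglongrightarrow> exp 1"
    using LIMSEQ_Suc[OF tendsto_exp_limit_sequentially[of 1]] by simp
  moreover have "?b \<longlonglongrightarrow> 1 + 0"
    using LIMSEQ_Suc[OF lim_inverse_n'] by (intro tendsto_add tendsto_const) simp
  ultimately have "(\<lambda>m. ?b m ^ Suc m * ?b m ^ a / ?b m) \<longlonglongrightarrow> exp 1 * (1 + 0) ^ a / (1 + 0)"
    by (intro tendsto_mult tendsto_divide tendsto_power) simp_all
  moreover have "?b m ^ Suc m * ?b m ^ a / ?b m
      = (1 + 1 / (real (m + (a + 1)) - real a)) ^ (m + (a + 1) - 1)" for m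
  proof -
    have "?b m > 0" by (intro add_pos_nonneg) simp_all
    thus ?thesis by (simp add: power_add)
  qed
  ultimately show "(\<lambda>m. (1 + 1 / (real (m + (a + 1)) - real a)) ^ (m + (a + 1) - 1)) \<longlonglongrightarrow> exp 1"
    by simp
qed

theorem mainTheorem2:
  shows "(\<lambda>n. tau n (compl_adj n (cycle_adj n))) \<longlonglongrightarrow> complex_of_real (exp 1)"
proof -
  let ?t = "\<lambda>n. \<Prod>k = 1..<n. 1 + 1 / compl_cycle_eigenvalue n k"
  have bounds: "(1 + 1 / real n) ^ (n - 1) \<le> ?t n \<and> ?t n \<le> (1 + 1 / (real n - 4)) ^ (n - 1)"
    if "n \<ge> 5" for n
    using prod_one_plus_inverse_bounds[of "real n - 4" "{1..<n}" "compl_cycle_eigenvalue n" "real n"]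
      compl_cycle_eigenvalue_bounds[of _ n] that by auto
  have "?t \<longlonglongrightarrow> exp 1"
  proof (rule tendsto_sandwich)
    show "\<forall>\<^sub>F n in sequentially. (1 + 1 / real n) ^ (n - 1) \<le> ?t n"
      and "\<forall>\<^sub>F n in sequentially. ?t n \<le> (1 + 1 / (real n - 4)) ^ (n - 1)"
      using bounds by (auto intro: eventually_sequentiallyI[of 5])
    show "(\<lambda>n. (1 + 1 / real n) ^ (n - 1)) \<longlonglongrightarrow> exp 1"
      using tendsto_one_plus_inverse_shifted_pow[of 0] by simp
    show "(\<lambda>n. (1 + 1 / (real n - 4)) ^ (n - 1)) \<longlonglongrightarrow> exp 1"
      using tendsto_one_plus_inverse_shifted_pow[of 4] by simp
  qed
  hence "(\<lambda>n. complex_of_real (?t n)) \<longlonglongrightarrow> complex_of_real (exp 1)"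
    by (rule tendsto_of_real)
  moreover have "\<forall>\<^sub>F n in sequentially. complex_of_real (?t n) = tau n (compl_adj n (cycle_adj n))"
    by (rule eventually_sequentiallyI[of 5]) (simp add: tau_compl_cycle)
  ultimately show ?thesis by (rule Lim_transform_eventually)
qed

end
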